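(* For $\mathbf x\in\Lambda$ with $\mathbf x(t)=2$, $$\Pi^{(1)}_{p_c}(\mathbf x)=\sum_{\mathbf s:\ \mathbf s(t)=1}\mathbb P_{p_c}\big(\{[\mathbf o,\mathbf s\rangle\to\mathbf x\}\circ\{\mathbf o\to\mathbf x\}\big).$$
   Context: Let $\Lambda=\mathbb Z^d\times\mathbb Z_+$; points $\mathbf x=(\mathbf x(s),\mathbf x(t))$; $\mathbf o=(o,0)$. Let $D(x)=\frac1{2d}\mathbf 1\{|x|=1\}$. Oriented percolation with parameter $p\in[0,2d]$: for $\mathbf x=(x,t),\mathbf y=(y,t+1)$ with $x\ne y$ the bond $[\mathbf x,\mathbf y\rangle$ is open with probability $pD(y-x)$, independently; law $\mathbb P_p$. A bond is $b=[\underline b,\bar b\rangle$. $\mathbf x\to\mathbf y$: open directed path from $\mathbf x$ to $\mathbf y$ (with $\mathbf x\to\mathbf x$). $p_c=\inf\{p:\mathbb P_p(\text{infinite open path from }\mathbf o)>0\}$. $\circ$: bond-disjoint occurrence; $\{\mathbf x\Rightarrow\mathbf y\}:=\{\mathbf x\to\mathbf y\}\circ\{\mathbf x\to\mathbf y\}$. $\{b\to\mathbf x\}$: $b$ open and $\bar b\to\mathbf x$ (so $\{[\mathbf o,\mathbf s\rangle\to\mathbf x\}$ means the bond $[\mathbf o,\mathbf s\rangle$ is open and $\mathbf s\to\mathbf x$). $b'$ is pivotal for $\{\mathbf v\to\mathbf x\}$ if $\mathbf v\to\mathbf x$ occurs but not when $b'$ is made closed; $\mathrm{piv}(\mathbf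 v\to\mathbf x)$ the set of these. $\tilde C^b(\mathbf u)$: vertices connected from $\mathbf u$ by open paths not using $b$. For $S\subset\Lambda$, $E(b,\mathbf x;S)=\{b\to\mathbf x\}\cap\{\mathbf x\in S\}\cap\{\underline{b'}\notin S\ \forall b'\in\mathrm{piv}(\bar b\to\mathbf x)\}$. $\Pi^{(1)}_p(\mathbf x)=\sum_{b_1}\mathbb P_p\big(\{\mathbf o\Rightarrow\underline b_1\}\cap E(b_1,\mathbf x;\tilde C^{b_1}(\mathbf o))\big)$ over all bonds. *)

theory Defs
  imports "HOL-Probability.Probability"
begin

text \<open>Points of Lambda = Z^d x Z_+: the dimension d is CARD('d) for a finite type 'd.\<close>
type_synonym 'd vtx = "('d \<Rightarrow> int) \<times> nat"
type_synonym 'd bnd = "'d vtx \<times> 'd vtx"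
type_synonym 'd cfg = "'d bnd \<Rightarrow> bool"

definition origin :: "'d vtx" where
  "origin = ((\<lambda>_. 0), 0)"

definition isbond :: "'d::finite bnd \<Rightarrow> bool" where
  "isbond b \<longleftrightarrow> snd (snd b) = Suc (snd (fst b)) \<and>
     (\<Sum>i\<in>UNIV. \<bar>fst (snd b) i - fst (fst b) i\<bar>) = 1"

text \<open>Probability that the pair b is open: p D(y-x) for bonds, 0 otherwise.\<close>
definition bondprob :: "real \<Rightarrow> 'd::finite bnd \<Rightarrow> real" where
  "bondprob p b = (if isbond b then p / (2 * real CARD('d)) else 0)"

definition Pperc :: "real \<Rightarrow> 'd::finite cfg measure" where
  "Pperc p = (\<Pi>\<^sub>M b\<in>UNIV. measure_pmf (bernoulli_pmf (bondprob p b)))"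

definition conn :: "'d::finite cfg \<Rightarrow> 'd vtx \<Rightarrow> 'd vtx \<Rightarrow> bool" where
  "conn \<omega> u v \<longleftrightarrow> (\<exists>ps. ps \<noteq> [] \<and> hd ps = u \<and> last ps = v \<and>
     (\<forall>i < length ps - 1. isbond (ps ! i, ps ! Suc i) \<and> \<omega> (ps ! i, ps ! Suc i)))"

definition perc_inf :: "'d::finite cfg \<Rightarrow> 'd vtx \<Rightarrow> bool" where
  "perc_inf \<omega> u \<longleftrightarrow> (\<exists>f. f 0 = u \<and> (\<forall>n. isbond (f n, f (Suc n)) \<and> \<omega> (f n, f (Suc n))))"

definition pc :: "'d::finite itself \<Rightarrow> real" where
  "pc _ = Inf {p \<in> {0..2 * real CARD('d)}.
      measure (Pperc p :: 'd cfg measure) {\<omega> \<in> space (Pperc p). perc_inf \<omega> origin} > 0}"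

text \<open>Bond-disjoint occurrence (van den Berg--Kesten): there are disjoint sets of bonds
  K, L such that the configuration on K alone guarantees A and on L alone guarantees B.\<close>
definition witnessed :: "'d bnd set \<Rightarrow> ('d cfg \<Rightarrow> bool) \<Rightarrow> 'd cfg \<Rightarrow> bool" where
  "witnessed K A \<omega> \<longleftrightarrow> (\<forall>\<omega>'. (\<forall>b\<in>K. \<omega>' b = \<omega> b) \<longrightarrow> A \<omega>')"

definition bdisj :: "('d cfg \<Rightarrow> bool) \<Rightarrow> ('d cfg \<Rightarrow> bool) \<Rightarrow> 'd cfg \<Rightarrow> bool" where
  "bdisj A B \<omega> \<longleftrightarrow> (\<exists>K L. K \<inter> L = {} \<and> witnessed K A \<omega> \<and> witnessed L B \<omega>)"

definition dconn :: "'d::finite cfg \<Rightarrow> 'd vtx \<Rightarrow> 'd vtx \<Rightarrow> bool" where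
  "dconn \<omega> u v \<longleftrightarrow> bdisj (\<lambda>\<omega>. conn \<omega> u v) (\<lambda>\<omega>. conn \<omega> u v) \<omega>"

definition bconn :: "'d::finite cfg \<Rightarrow> 'd bnd \<Rightarrow> 'd vtx \<Rightarrow> bool" where
  "bconn \<omega> b x \<longleftrightarrow> \<omega> b \<and> conn \<omega> (snd b) x"

definition pivotal :: "'d::finite cfg \<Rightarrow> 'd bnd \<Rightarrow> 'd vtx \<Rightarrow> 'd vtx \<Rightarrow> bool" where
  "pivotal \<omega> c v x \<longleftrightarrow> conn \<omega> v x \<and> \<not> conn (fun_upd \<omega> c False) v x"

definition Ctil :: "'d::finite cfg \<Rightarrow> 'd bnd \<Rightarrow> 'd vtx \<Rightarrow> 'd vtx set" where
  "Ctil \<omega> b u = {w. conn (fun_upd \<omega> b False) u w}"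

definition Eev :: "'d::finite cfg \<Rightarrow> 'd bnd \<Rightarrow> 'd vtx \<Rightarrow> 'd vtx set \<Rightarrow> bool" where
  "Eev \<omega> b x S \<longleftrightarrow> bconn \<omega> b x \<and> x \<in> S \<and>
     (\<forall>c. pivotal \<omega> c (snd b) x \<longrightarrow> fst c \<notin> S)"

definition Pi1 :: "real \<Rightarrow> 'd::finite vtx \<Rightarrow> real" where
  "Pi1 p x = (\<Sum>\<^sub>\<infinity> b \<in> {b. isbond b}.
     measure (Pperc p) {\<omega> \<in> space (Pperc p).
        dconn \<omega> origin (fst b) \<and> Eev \<omega> b x (Ctil \<omega> b origin)})"

end

theory Submission
  imports Defs
begin

text \<open>
  An open path gains one unit of time per bond, so a connection from \<open>o\<close> to a point \<open>x\<close> at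
  time 2 is a two-step route \<open>o \<rightarrow> s \<rightarrow> x\<close>. A bond \<open>[v, v'\<rangle>\<close> with \<open>v \<noteq> o\<close> contributes nothing
  to \<open>\<Pi>\<^sup>(\<^sup>1\<^sup>)(x)\<close>: either \<open>v'\<close> is too late to reach \<open>x\<close>, or \<open>v\<close> lies at time 1, where \<open>o \<Rightarrow> v\<close>
  would need the single bond \<open>[o, v\<rangle>\<close> twice. For the bond \<open>[o, s\<rangle>\<close> both the
  \<open>\<Pi>\<^sup>(\<^sup>1\<^sup>)\<close>-event and \<open>{[o, s\<rangle> \<rightarrow> x} \<circ> {o \<rightarrow> x}\<close> say exactly that \<open>o \<rightarrow> s \<rightarrow> x\<close> is open and
  some second route \<open>o \<rightarrow> w \<rightarrow> x\<close> with \<open>w \<noteq> s\<close> is open, so the summands agree configuration by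
  configuration. None of this depends on the value \<open>p = p\<^sub>c\<close>.
\<close>

lemma bond_time: "isbond (u, v) \<Longrightarrow> snd v = Suc (snd u)"
  by (simp add: isbond_def)

lemma path_time:
  fixes ps :: "'d::finite vtx list"
  assumes "ps \<noteq> []" and "\<forall>i < length ps - 1. isbond (ps ! i, ps ! Suc i)"
  shows "snd (last ps) = snd (hd ps) + (length ps - 1)"
  using assms
proof (induction ps rule: induct_list012)
  case (3 u v ps)
  have "\<forall>i < length (v # ps) - 1. isbond ((v # ps) ! i, (v # ps) ! Suc i)"
  proof (intro allI impI)
    fix i assume "i < length (v # ps) - 1"
    then show "isbond ((v # ps) ! i, (v # ps) ! Suc i)"
      using "3.prems"(2)[rule_format, of "Suc i"] by simp
  qed
  moreover have "snd v = Suc (snd u)"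
    using "3.prems"(2)[rule_format, of 0] by (simp add: bond_time)
  ultimately show ?case
    using "3.IH"(2) by simp
qed simp_all

lemma conn_time_le:
  assumes "conn \<omega> u v"
  shows "snd u \<le> snd v"
  using assms path_time unfolding conn_def by fastforce

lemma conn_time_eq_imp_eq:
  assumes "conn \<omega> u v" and "snd v = snd u"
  shows "u = v"
proof -
  obtain ps where ps: "ps \<noteq> []" "hd ps = u" "last ps = v"
    "\<forall>i < length ps - 1. isbond (ps ! i, ps ! Suc i) \<and> \<omega> (ps ! i, ps ! Suc i)"
    using assms(1) unfolding conn_def by blast
  then have "length ps = 1"
    using path_time[of ps] assms(2) by (cases ps) auto
  with ps show "u = v" by (cases ps) auto
qed

lemma conn_refl: "conn \<omega> u u"
  unfolding conn_def by (rule exI[of _ "[u]"]) simp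

lemma conn_iff_first_step:
  "conn \<omega> u v \<longleftrightarrow> u = v \<or> (\<exists>w. isbond (u, w) \<and> \<omega> (u, w) \<and> conn \<omega> w v)"
proof
  assume "conn \<omega> u v"
  then obtain qs where ps: "last (u # qs) = v"
    "\<forall>i < length qs. isbond ((u # qs) ! i, qs ! i) \<and> \<omega> ((u # qs) ! i, qs ! i)"
    unfolding conn_def by (metis diff_Suc_1 hd_Cons_tl length_Cons nth_Cons_Suc)
  show "u = v \<or> (\<exists>w. isbond (u, w) \<and> \<omega> (u, w) \<and> conn \<omega> w v)"
  proof (cases qs)
    case Nil
    then show ?thesis using ps by simp
  next
    case (Cons w rs)
    have "conn \<omega> w v" unfolding conn_def
      using ps Cons by (intro exI[of _ qs]) auto
    moreover have "isbond (u, w) \<and> \<omega> (u, w)"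
      using ps(2)[rule_format, of 0] Cons by simp
    ultimately show ?thesis by blast
  qed
next
  assume "u = v \<or> (\<exists>w. isbond (u, w) \<and> \<omega> (u, w) \<and> conn \<omega> w v)"
  then show "conn \<omega> u v"
  proof
    assume "\<exists>w. isbond (u, w) \<and> \<omega> (u, w) \<and> conn \<omega> w v"
    then obtain w qs where path: "isbond (u, w)" "\<omega> (u, w)" "qs \<noteq> []" "hd qs = w" "last qs = v"
      "\<forall>i < length qs - 1. isbond (qs ! i, qs ! Suc i) \<and> \<omega> (qs ! i, qs ! Suc i)"
      unfolding conn_def by blast
    show ?thesis unfolding conn_def
    proof (intro exI[of _ "u # qs"] conjI allI impI)
      fix i assume "i < length (u # qs) - 1"
      with path show "isbond ((u # qs) ! i, (u # qs) ! Suc i)" "\<omega> ((u # qs) ! i, (u # qs) ! Suc i)"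
        by (cases i; auto simp: hd_conv_nth)+
    qed (use path in auto)
  qed (simp add: conn_refl)
qed

lemma conn_next_time_iff:
  assumes "snd v = Suc (snd u)"
  shows "conn \<omega> u v \<longleftrightarrow> isbond (u, v) \<and> \<omega> (u, v)"
proof
  assume "conn \<omega> u v"
  moreover have "u \<noteq> v" using assms by auto
  ultimately obtain w where "isbond (u, w)" "\<omega> (u, w)" "conn \<omega> w v"
    using conn_iff_first_step by metis
  then show "isbond (u, v) \<and> \<omega> (u, v)"
    using assms bond_time conn_time_eq_imp_eq by metis
next
  assume "isbond (u, v) \<and> \<omega> (u, v)"
  then show "conn \<omega> u v"
    using conn_iff_first_step conn_refl by blast
qed

lemma conn_two_steps_iff:
  assumes "snd v = Suc (Suc (snd u))"
  shows "conn \<omega> u v \<longleftrightarrow> (\<exists>w. isbond (u, w) \<and> \<omega> (u, w) \<and> isbond (w, v) \<and> \<omega> (w, v))"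
proof -
  have "conn \<omega> w v \<longleftrightarrow> isbond (w, v) \<and> \<omega> (w, v)" if "isbond (u, w)" for w
    using that assms bond_time conn_next_time_iff by metis
  moreover have "u \<noteq> v" using assms by auto
  ultimately show ?thesis
    using conn_iff_first_step[of \<omega> u v] by auto
qed

lemma witnessed_imp: "witnessed K A \<omega> \<Longrightarrow> A \<omega>"
  unfolding witnessed_def by auto

lemma witnessed_restrict: "witnessed K A \<omega> \<Longrightarrow> A (\<lambda>c. c \<in> K \<and> \<omega> c)"
  unfolding witnessed_def by auto

lemma witnessed_mem:
  assumes "witnessed K A \<omega>" and "\<And>\<omega>'. A \<omega>' \<Longrightarrow> \<omega>' b"
  shows "b \<in> K"
  using assms unfolding witnessed_def by (metis fun_upd_other fun_upd_same)

lemma not_dconn_next_time: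
  assumes "snd v = Suc (snd u)"
  shows "\<not> dconn \<omega> u v"
proof
  assume "dconn \<omega> u v"
  then obtain K L where "K \<inter> L = {}"
    "witnessed K (\<lambda>\<omega>. conn \<omega> u v) \<omega>" "witnessed L (\<lambda>\<omega>. conn \<omega> u v) \<omega>"
    unfolding dconn_def bdisj_def by blast
  moreover have "\<omega>' (u, v)" if "conn \<omega>' u v" for \<omega>'
    using that conn_next_time_iff[OF assms] by blast
  ultimately show False
    using witnessed_mem by blast
qed

lemma dconn_refl: "dconn \<omega> u u"
  unfolding dconn_def bdisj_def witnessed_def by (auto simp: conn_refl)

lemma snd_origin [simp]: "snd origin = 0"
  by (simp add: origin_def)

lemma Pi1_event_off_origin:
  assumes "isbond b" and "fst b \<noteq> origin" and "snd x = 2"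
  shows "\<not> (dconn \<omega> origin (fst b) \<and> Eev \<omega> b x (Ctil \<omega> b origin))"
proof
  assume event: "dconn \<omega> origin (fst b) \<and> Eev \<omega> b x (Ctil \<omega> b origin)"
  then have "conn \<omega> origin (fst b)"
    unfolding dconn_def bdisj_def using witnessed_imp by blast
  then have "snd (fst b) \<noteq> 0"
    using conn_time_eq_imp_eq assms(2) by fastforce
  moreover have "snd (fst b) \<noteq> 1"
    using event not_dconn_next_time[of "fst b" origin \<omega>] by auto
  moreover have "conn \<omega> (snd b) x"
    using event unfolding Eev_def bconn_def by blast
  then have "snd (snd b) \<le> 2"
    using conn_time_le assms(3) by fastforce
  ultimately show False
    using bond_time[of "fst b" "snd b"] assms(1) by simp
qed

definition two_routes :: "'d::finite cfg \<Rightarrow> 'd vtx \<Rightarrow> 'd vtx \<Rightarrow> 'd vtx \<Rightarrow> bool" where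
  "two_routes \<omega> u s x \<longleftrightarrow> \<omega> (u, s) \<and> isbond (s, x) \<and> \<omega> (s, x) \<and>
    (\<exists>w. w \<noteq> s \<and> isbond (u, w) \<and> \<omega> (u, w) \<and> isbond (w, x) \<and> \<omega> (w, x))"

lemma Eev_iff_two_routes:
  assumes so: "snd s = Suc (snd u)" and xs: "snd x = Suc (snd s)"
  shows "Eev \<omega> (u, s) x (Ctil \<omega> (u, s) u) \<longleftrightarrow> two_routes \<omega> u s x"
proof -
  have xo: "snd x = Suc (Suc (snd u))"
    using assms by simp
  have "x \<noteq> s" using xs by auto
  then have "x \<in> Ctil \<omega> (u, s) u \<longleftrightarrow>
      (\<exists>w. w \<noteq> s \<and> isbond (u, w) \<and> \<omega> (u, w) \<and> isbond (w, x) \<and> \<omega> (w, x))"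
    unfolding Ctil_def using conn_two_steps_iff[OF xo, of "fun_upd \<omega> (u, s) False"] by auto
  moreover have "s \<notin> Ctil \<omega> (u, s) u"
    unfolding Ctil_def using conn_next_time_iff[OF so] by simp
  moreover have "fst c = s" if "pivotal \<omega> c s x" for c
    using that conn_next_time_iff[OF xs] unfolding pivotal_def by (cases "c = (s, x)") auto
  ultimately show ?thesis
    unfolding Eev_def two_routes_def bconn_def using conn_next_time_iff[OF xs] by auto
qed

lemma bdisj_iff_two_routes:
  assumes so: "snd s = Suc (snd u)" and xs: "snd x = Suc (snd s)"
  shows "bdisj (\<lambda>\<omega>. bconn \<omega> (u, s) x) (\<lambda>\<omega>. conn \<omega> u x) \<omega> \<longleftrightarrow> two_routes \<omega> u s x"
proof -
  have xo: "snd x = Suc (Suc (snd u))"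
    using assms by simp
  have bconn_iff: "bconn \<omega>' (u, s) x \<longleftrightarrow> \<omega>' (u, s) \<and> isbond (s, x) \<and> \<omega>' (s, x)" for \<omega>'
    unfolding bconn_def using conn_next_time_iff[OF xs] by simp
  show ?thesis
  proof
    assume "bdisj (\<lambda>\<omega>. bconn \<omega> (u, s) x) (\<lambda>\<omega>. conn \<omega> u x) \<omega>"
    then obtain K L where KL: "K \<inter> L = {}" "witnessed K (\<lambda>\<omega>. bconn \<omega> (u, s) x) \<omega>"
      "witnessed L (\<lambda>\<omega>. conn \<omega> u x) \<omega>"
      unfolding bdisj_def by blast
    have "(u, s) \<in> K"
      by (rule witnessed_mem[OF KL(2)]) (simp add: bconn_def)
    have "conn (\<lambda>c. c \<in> L \<and> \<omega> c) u x"
      by (rule witnessed_restrict[OF KL(3)])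
    then obtain w where w: "isbond (u, w)" "(u, w) \<in> L" "\<omega> (u, w)"
      "isbond (w, x)" "\<omega> (w, x)"
      unfolding conn_two_steps_iff[OF xo] by blast
    have "w \<noteq> s"
      using \<open>(u, s) \<in> K\<close> w(2) KL(1) by blast
    with w show "two_routes \<omega> u s x"
      using witnessed_imp[OF KL(2)] unfolding two_routes_def bconn_iff by blast
  next
    assume "two_routes \<omega> u s x"
    then obtain w where route: "\<omega> (u, s)" "isbond (s, x)" "\<omega> (s, x)" "w \<noteq> s"
      "isbond (u, w)" "\<omega> (u, w)" "isbond (w, x)" "\<omega> (w, x)"
      unfolding two_routes_def by blast
    have "snd w = Suc (snd u)"
      using bond_time[OF route(5)] .
    then have "s \<noteq> u" "x \<noteq> s" "x \<noteq> w" "w \<noteq> u"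
      using assms by auto
    then have "{(u, s), (s, x)} \<inter> {(u, w), (w, x)} = {}"
      using route(4) by auto
    moreover have "witnessed {(u, s), (s, x)} (\<lambda>\<omega>. bconn \<omega> (u, s) x) \<omega>"
      unfolding witnessed_def bconn_iff using route by simp
    moreover have "witnessed {(u, w), (w, x)} (\<lambda>\<omega>. conn \<omega> u x) \<omega>"
      unfolding witnessed_def conn_two_steps_iff[OF xo] using route by blast
    ultimately show "bdisj (\<lambda>\<omega>. bconn \<omega> (u, s) x) (\<lambda>\<omega>. conn \<omega> u x) \<omega>"
      unfolding bdisj_def by blast
  qed
qed

lemma prob_space_Pperc: "prob_space (Pperc p)"
  unfolding Pperc_def by (rule prob_space_PiM) (rule prob_space_measure_pmf)

lemma measure_Pperc_open:
  fixes b :: "'d::finite bnd"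
  shows "measure (Pperc p) {\<omega> \<in> space (Pperc p). \<omega> b} = pmf (bernoulli_pmf (bondprob p b)) True"
proof -
  interpret product_prob_space "\<lambda>b. measure_pmf (bernoulli_pmf (bondprob p b))" "UNIV :: 'd bnd set"
    by (intro product_prob_space.intro product_sigma_finite.intro product_prob_space_axioms.intro
        prob_space_imp_sigma_finite prob_space_measure_pmf)
  have "emeasure (Pperc p) {\<omega> \<in> space (Pperc p). \<omega> b \<in> {True}}
      = emeasure (measure_pmf (bernoulli_pmf (bondprob p b))) {True}"
    unfolding Pperc_def by (rule emeasure_PiM_Collect_single) simp_all
  then show ?thesis
    by (simp add: measure_def emeasure_pmf_single)
qed

lemma measure_Pperc_nonbond_open:
  assumes "\<not> isbond b" and "\<And>\<omega>. A \<omega> \<Longrightarrow> \<omega> b"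
  shows "measure (Pperc p) {\<omega> \<in> space (Pperc p). A \<omega>} = 0"
proof -
  interpret prob_space "Pperc p" by (rule prob_space_Pperc)
  have "{\<omega> \<in> space (Pperc p). \<omega> b} \<in> sets (Pperc p)"
    using sets_Collect_single[of b UNIV "{True}"] unfolding Pperc_def by simp
  then have "measure (Pperc p) {\<omega> \<in> space (Pperc p). A \<omega>}
      \<le> measure (Pperc p) {\<omega> \<in> space (Pperc p). \<omega> b}"
    using assms(2) by (intro finite_measure_mono) auto
  also have "\<dots> = 0"
    using assms(1) by (simp add: measure_Pperc_open bondprob_def)
  finally show ?thesis
    using measure_nonneg order_antisym by blast
qed

theorem Pi1_at_time_two:
  fixes x :: "'d::finite vtx"
  assumes "snd x = 2"
  shows "Pi1 p x =
    (\<Sum>\<^sub>\<infinity> s \<in> {s :: 'd vtx. snd s = 1}.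
       measure (Pperc p) {\<omega> \<in> space (Pperc p).
          bdisj (\<lambda>\<omega>. bconn \<omega> (origin, s) x) (\<lambda>\<omega>. conn \<omega> origin x) \<omega>})"
proof -
  define g where "g b = measure (Pperc p) {\<omega> \<in> space (Pperc p).
      dconn \<omega> origin (fst b) \<and> Eev \<omega> b x (Ctil \<omega> b origin)}" for b :: "'d bnd"
  have "Pi1 p x = infsum g {b. isbond b}"
    unfolding Pi1_def g_def ..
  also have "\<dots> = infsum g (Pair origin ` {s. snd s = 1})"
  proof (rule infsum_cong_neutral)
    fix b :: "'d bnd" assume b: "b \<in> {b. isbond b} - Pair origin ` {s. snd s = 1}"
    then have "isbond b" by simp
    moreover have "fst b \<noteq> origin"
      using b bond_time[of origin "snd b"] by (metis (mono_tags) Diff_iff One_nat_def image_eqI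
          mem_Collect_eq prod.collapse snd_origin)
    ultimately have "{\<omega> \<in> space (Pperc p). dconn \<omega> origin (fst b) \<and> Eev \<omega> b x (Ctil \<omega> b origin)} = {}"
      using Pi1_event_off_origin assms by blast
    then show "g b = 0"
      unfolding g_def by (simp only: measure_empty)
  next
    fix b :: "'d bnd" assume "b \<in> Pair origin ` {s. snd s = 1} - {b. isbond b}"
    then show "g b = 0"
      unfolding g_def by (intro measure_Pperc_nonbond_open[of b]) (auto simp: Eev_def bconn_def)
  qed simp
  also have "\<dots> = infsum (g \<circ> Pair origin) {s. snd s = 1}"
    by (rule infsum_reindex) (simp add: inj_on_def)
  also have "\<dots> = (\<Sum>\<^sub>\<infinity> s \<in> {s :: 'd vtx. snd s = 1}.
       measure (Pperc p) {\<omega> \<in> space (Pperc p).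
          bdisj (\<lambda>\<omega>. bconn \<omega> (origin, s) x) (\<lambda>\<omega>. conn \<omega> origin x) \<omega>})"
  proof (rule infsum_cong)
    fix s :: "'d vtx" assume "s \<in> {s. snd s = 1}"
    then have times: "snd s = Suc (snd origin)" "snd x = Suc (snd s)"
      using assms by simp_all
    show "(g \<circ> Pair origin) s = measure (Pperc p) {\<omega> \<in> space (Pperc p).
        bdisj (\<lambda>\<omega>. bconn \<omega> (origin, s) x) (\<lambda>\<omega>. conn \<omega> origin x) \<omega>}"
      unfolding g_def o_def fst_conv
      by (simp only: dconn_refl Eev_iff_two_routes[OF times] bdisj_iff_two_routes[OF times] simp_thms)
  qed
  finally show ?thesis .
qed

theorem lemma5p3:
  fixes x :: "'d::finite vtx"
  assumes "snd x = 2"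
  shows "Pi1 (pc TYPE('d)) x =
    (\<Sum>\<^sub>\<infinity> s \<in> {s :: 'd vtx. snd s = 1}.
       measure (Pperc (pc TYPE('d))) {\<omega> \<in> space (Pperc (pc TYPE('d))).
          bdisj (\<lambda>\<omega>. bconn \<omega> (origin, s) x) (\<lambda>\<omega>. conn \<omega> origin x) \<omega>})"
  using assms by (rule Pi1_at_time_two)

end
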